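(* For every dimension $d\ge 1$ and every noise level $\delta>0$, the limit $\mathrm{OPT}_d(\infty,\delta):=\lim_{T\to\infty}\mathrm{OPT}_d(T,\delta)$ exists and \[ \mathrm{OPT}_d(\infty,\delta)=\sqrt{\frac{2d}{d+1}}\,\delta . \]
   Context: Linear reconstruction game: fix $d\ge 1$, a number of rounds $T\ge 0$ and a noise level $\delta>0$. An adversary holds a secret point $x^*\in\mathbb{R}^d$. In each round $t=1,\dots,T$ the reconstructor chooses a unit vector $v_t\in S^{d-1}$ (possibly adaptively, as a function of previous answers) and the adversary returns a real number $r_t$ with $|r_t-\langle x^*,v_t\rangle|\le\delta$. After $T$ rounds the reconstructor outputs $\hat x_T\in\mathbb{R}^d$. All strategies are deterministic. The optimal reconstruction error is $\mathrm{OPT}_d(T,\delta)=\inf_{\mathcal R}\sup_{x^*\in\mathbb{R}^d}\sup_{\mathcal A}\|\hat x_T-x^*\|_2$, where $\mathcal R$ ranges over reconstructor strategies for $T$ rounds and $\mathcal A$ over adversary answer strategies satisfying the noise constraint for the secret $x^*$. *)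

theory Defs
  imports "HOL-Analysis.Analysis" "HOL-Library.Extended_Real"
begin

text \<open>A deterministic reconstructor is a pair (Q, out): Q maps the list of answers
received so far to the next query vector, out maps the list of all T answers to
the estimate. A deterministic adversary maps the list of queries asked so far
(the last one being the current query) to its answer.\<close>

fun play :: "(real list \<Rightarrow> real^'d) \<Rightarrow> ((real^'d) list \<Rightarrow> real) \<Rightarrow> nat \<Rightarrow> real list" where
  "play Q A 0 = []"
| "play Q A (Suc n) =
     (let rs = play Q A n in rs @ [A (map (\<lambda>i. Q (take i rs)) [0..<Suc n])])"

definition valid_reconstructor :: "(real list \<Rightarrow> real^'d) \<Rightarrow> bool" where
  "valid_reconstructor Q \<longleftrightarrow> (\<forall>rs. norm (Q rs) = 1)"

definition valid_adversary :: "real \<Rightarrow> real^'d \<Rightarrow> ((real^'d) list \<Rightarrow> real) \<Rightarrow> bool" where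
  "valid_adversary \<delta> x A \<longleftrightarrow> (\<forall>qs. qs \<noteq> [] \<longrightarrow> \<bar>A qs - x \<bullet> last qs\<bar> \<le> \<delta>)"

definition OPT :: "'d::finite itself \<Rightarrow> nat \<Rightarrow> real \<Rightarrow> ereal" where
  "OPT _ T \<delta> =
     (INF QO \<in> {(Q :: real list \<Rightarrow> real^'d, out :: real list \<Rightarrow> real^'d). valid_reconstructor Q}.
        (SUP xA \<in> {(x :: real^'d, A). valid_adversary \<delta> x A}.
           ereal (norm (snd QO (play (fst QO) (snd xA) T) - fst xA))))"

end

theory Submission
  imports Defs
begin

text \<open>Upper bound: ask the directions of a finite \<epsilon>-net of the unit sphere cyclically. After one
  round, two points consistent with all answers differ by at most 2\<delta> along every net direction,
  hence by at most 2\<delta>/(1 - \<epsilon>). By Jung's theorem the consistent set lies in a ball of radius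
  sqrt(d/(2(d+1))) times its diameter, and the reconstructor outputs the centre of that ball.

  Lower bound: the d+1 vertices of a regular simplex of edge 2\<delta> project onto any unit vector
  within an interval of length 2\<delta>, so an adversary answering the midpoint of that interval is
  consistent with every vertex. Whatever the reconstructor outputs, its mean squared distance to the
  vertices is at least the squared circumradius 2d\<delta>^2/(d+1) of the simplex.\<close>

section \<open>Jung's theorem\<close>

lemma sum_weighted_dist_sq:
  fixes p :: "'i \<Rightarrow> 'a::real_inner"
  assumes "sum u I = 1" "(\<Sum>i\<in>I. u i *\<^sub>R p i) = c"
  shows "(\<Sum>i\<in>I. u i * (dist x (p i))^2) = (dist x c)^2 + (\<Sum>i\<in>I. u i * (dist c (p i))^2)"
proof -
  have split: "(dist x (p i))^2 = (dist x c)^2 + (dist c (p i))^2 + 2 * inner (x - c) (c - p i)" for i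
  proof -
    have "x - p i = (x - c) + (c - p i)" by simp
    then show ?thesis
      by (simp only: dist_norm power2_norm_eq_inner inner_add_left inner_add_right inner_commute[of "c - p i" "x - c"])
  qed
  have centred: "(\<Sum>i\<in>I. u i *\<^sub>R (c - p i)) = 0"
    using assms by (simp add: scaleR_diff_right sum_subtractf flip: scaleR_sum_left)
  have "(\<Sum>i\<in>I. u i * (dist x (p i))^2)
      = (\<Sum>i\<in>I. u i * (dist x c)^2 + u i * (dist c (p i))^2 + 2 * inner (x - c) (u i *\<^sub>R (c - p i)))"
    by (rule sum.cong) (simp_all add: split algebra_simps)
  also have "\<dots> = sum u I * (dist x c)^2 + (\<Sum>i\<in>I. u i * (dist c (p i))^2)
      + 2 * inner (x - c) (\<Sum>i\<in>I. u i *\<^sub>R (c - p i))"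
    by (simp add: sum.distrib sum_distrib_left sum_distrib_right inner_sum_right)
  finally show ?thesis using assms(1) centred by simp
qed

definition max_dist :: "'a::metric_space set \<Rightarrow> 'a \<Rightarrow> real" where
  "max_dist K c = (SUP x\<in>K. dist c x)"

lemma dist_le_max_dist:
  assumes "compact K" "y \<in> K"
  shows "dist c y \<le> max_dist K c"
proof -
  have "compact ((\<lambda>x. dist c x) ` K)"
    using assms(1) by (intro compact_continuous_image continuous_intros)
  then have "bdd_above ((\<lambda>x. dist c x) ` K)"
    by (intro bounded_imp_bdd_above compact_imp_bounded)
  then show ?thesis unfolding max_dist_def using assms(2) by (rule cSUP_upper2) simp
qed

lemma max_dist_attained:
  assumes "compact K" "K \<noteq> {}"
  shows "\<exists>x\<in>K. max_dist K c = dist c x"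
proof -
  obtain x where x: "x \<in> K" "\<And>y. y \<in> K \<Longrightarrow> dist c y \<le> dist c x"
  proof -
    have "continuous_on K (dist c)" by (intro continuous_intros)
    then show ?thesis using continuous_attains_sup[OF assms] that by blast
  qed
  then have "max_dist K c = dist c x"
    unfolding max_dist_def by (intro cSup_eq_maximum) auto
  then show ?thesis using x(1) by blast
qed

lemma max_dist_lipschitz:
  assumes "compact K" "K \<noteq> {}"
  shows "1-lipschitz_on UNIV (max_dist K)"
proof -
  have le: "max_dist K c \<le> max_dist K c' + dist c c'" for c c'
  proof -
    obtain x where "x \<in> K" "max_dist K c = dist c x" using max_dist_attained[OF assms] by blast
    moreover have "dist c x \<le> dist c c' + dist c' x" by (rule dist_triangle)
    moreover have "dist c' x \<le> max_dist K c'" using dist_le_max_dist[OF assms(1) \<open>x \<in> K\<close>] .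
    ultimately show ?thesis by linarith
  qed
  show ?thesis
  proof (rule lipschitz_onI)
    show "dist (max_dist K c) (max_dist K c') \<le> 1 * dist c c'" for c c'
      using le[of c c'] le[of c' c] by (simp add: dist_real_def dist_commute abs_le_iff)
  qed simp
qed

lemma chebyshev_centre_exists:
  fixes K :: "'a::heine_borel set"
  assumes "compact K" "K \<noteq> {}"
  shows "\<exists>c. \<forall>c'. max_dist K c \<le> max_dist K c'"
proof -
  obtain x0 where x0: "x0 \<in> K" using assms(2) by blast
  define B where "B = cball x0 (max_dist K x0)"
  have "continuous_on B (max_dist K)"
    using lipschitz_on_continuous_on[OF max_dist_lipschitz[OF assms]] continuous_on_subset by blast
  moreover have "B \<noteq> {}"
    using dist_le_max_dist[OF assms(1) x0, of x0] by (simp add: B_def)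
  ultimately obtain c where c: "c \<in> B" "\<And>y. y \<in> B \<Longrightarrow> max_dist K c \<le> max_dist K y"
    using continuous_attains_inf[OF compact_cball] unfolding B_def by metis
  have "max_dist K c \<le> max_dist K c'" for c'
  proof (cases "c' \<in> B")
    case False
    \<comment> \<open>a centre outside B is farther from x0 than x0 is from all of K\<close>
    then have "max_dist K x0 < dist c' x0" by (simp add: B_def dist_commute)
    also have "\<dots> \<le> max_dist K c'" by (rule dist_le_max_dist[OF assms(1) x0])
    finally show ?thesis using c(2)[of x0] dist_le_max_dist[OF assms(1) x0, of x0] by (simp add: B_def)
  qed (use c in blast)
  then show ?thesis by blast
qed

lemma dist_shift_towards_less:
  fixes c x u :: "'a::real_inner"
  assumes "dist c x \<le> r" "t > 0" "t * (norm u)^2 < 2 * inner u (x - c)"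
  shows "dist (c + t *\<^sub>R u) x < r"
proof -
  have "(dist (c + t *\<^sub>R u) x)^2 = (dist c x)^2 - t * (2 * inner u (x - c) - t * (norm u)^2)"
    by (simp add: dist_norm power2_norm_eq_inner inner_diff_left inner_diff_right inner_add_left
        inner_add_right inner_commute algebra_simps)
  also have "\<dots> < (dist c x)^2" using assms(2,3) by simp
  also have "\<dots> \<le> r^2" using assms(1) by (simp add: power_mono)
  finally have "(dist (c + t *\<^sub>R u) x)^2 < r^2" .
  moreover have "0 \<le> r" using assms(1) zero_le_dist[of c x] by linarith
  ultimately show ?thesis by (rule power2_less_imp_less)
qed

lemma max_dist_decreases_towards_farthest_points:
  fixes K :: "'a::euclidean_space set"
  assumes K: "compact K" "K \<noteq> {}" and "\<eta> > 0"
    and far: "\<And>x. x \<in> K \<Longrightarrow> dist c x = max_dist K c \<Longrightarrow> \<eta> < inner u (x - c)"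
  shows "\<exists>c'. max_dist K c' < max_dist K c"
proof -
  define r where "r = max_dist K c"
  have nu: "norm u > 0"
  proof -
    obtain x where "x \<in> K" "max_dist K c = dist c x" using max_dist_attained[OF K] by blast
    then have "\<eta> < inner u (x - c)" using far by simp
    then show ?thesis using \<open>\<eta> > 0\<close> by (cases "u = 0") auto
  qed
  define K2 where "K2 = K \<inter> {x. inner u (x - c) \<le> \<eta> / 2}"
  have "compact K2"
    unfolding K2_def by (intro compact_Int_closed K(1) closed_Collect_le continuous_intros)
  \<comment> \<open>the points of K not lying far along u are not farthest, so by compactness they stay
      uniformly closer than r\<close>
  obtain r2 where r2: "r2 < r" "\<And>x. x \<in> K2 \<Longrightarrow> dist c x \<le> r2"
  proof (cases "K2 = {}")
    case True then show ?thesis using that[of "r - 1"] by auto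
  next
    case False
    obtain x where x: "x \<in> K2" "\<And>y. y \<in> K2 \<Longrightarrow> dist c y \<le> dist c x"
    proof -
      have "continuous_on K2 (dist c)" by (intro continuous_intros)
      then show ?thesis using continuous_attains_sup[OF \<open>compact K2\<close> False] that by blast
    qed
    have "x \<in> K" "inner u (x - c) \<le> \<eta> / 2" using x(1) by (auto simp: K2_def)
    then have "dist c x \<le> r" "dist c x \<noteq> r"
      using dist_le_max_dist[OF K(1)] far[of x] \<open>\<eta> > 0\<close> by (auto simp: r_def)
    then show ?thesis using that[of "dist c x"] x(2) by simp
  qed
  define t where "t = min ((r - r2) / (2 * norm u)) (\<eta> / (2 * (norm u)^2))"
  have "t > 0" using r2(1) \<open>\<eta> > 0\<close> nu by (simp add: t_def)
  have "t * norm u \<le> (r - r2) / 2"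
    using nu by (simp add: t_def min_def field_simps)
  then have t_u: "t * norm u < r - r2" using r2(1) by simp
  have "t * (norm u)^2 \<le> \<eta> / 2"
    using nu by (simp add: t_def min_def field_simps)
  then have t_u2: "t * (norm u)^2 < \<eta>" using \<open>\<eta> > 0\<close> by simp
  have closer: "dist (c + t *\<^sub>R u) x < r" if "x \<in> K" for x
  proof (cases "x \<in> K2")
    case True
    have "dist (c + t *\<^sub>R u) x \<le> dist (c + t *\<^sub>R u) c + dist c x" by (rule dist_triangle)
    also have "\<dots> \<le> t * norm u + r2" using r2(2)[OF True] \<open>t > 0\<close> by (simp add: dist_norm)
    finally show ?thesis using t_u by simp
  next
    case False
    then have "t * (norm u)^2 < 2 * inner u (x - c)" using \<open>x \<in> K\<close> t_u2 by (simp add: K2_def)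
    moreover have "dist c x \<le> r" using dist_le_max_dist[OF K(1) \<open>x \<in> K\<close>] by (simp add: r_def)
    ultimately show ?thesis using dist_shift_towards_less \<open>t > 0\<close> by blast
  qed
  obtain x where "x \<in> K" "max_dist K (c + t *\<^sub>R u) = dist (c + t *\<^sub>R u) x"
    using max_dist_attained[OF K] by blast
  then have "max_dist K (c + t *\<^sub>R u) < max_dist K c" using closer by (simp add: r_def)
  then show ?thesis by blast
qed

lemma chebyshev_centre_in_hull_farthest_points:
  fixes K :: "'a::euclidean_space set"
  assumes K: "compact K" "K \<noteq> {}" and min: "\<And>c'. max_dist K c \<le> max_dist K c'"
  shows "c \<in> convex hull {x\<in>K. dist c x = max_dist K c}"
proof (rule ccontr)
  define C where "C = {x\<in>K. dist c x = max_dist K c}"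
  assume "c \<notin> convex hull {x\<in>K. dist c x = max_dist K c}"
  then have "c \<notin> convex hull C" by (simp add: C_def)
  moreover have "C = K \<inter> sphere c (max_dist K c)" by (auto simp: C_def)
  then have "closed (convex hull C)"
    using K(1) by (simp add: compact_imp_closed compact_convex_hull compact_Int_closed)
  ultimately obtain u b where ub: "inner u c < b" "\<And>x. x \<in> convex hull C \<Longrightarrow> b < inner u x"
    using separating_hyperplane_closed_point[OF convex_convex_hull] by blast
  have "b - inner u c < inner u (x - c)" if "x \<in> C" for x
    using ub(2)[OF hull_inc[OF that]] by (simp add: inner_diff_right)
  then obtain c' where "max_dist K c' < max_dist K c"
    using max_dist_decreases_towards_farthest_points[OF K, of "b - inner u c" c u] ub(1)
    by (auto simp: C_def)
  then show False using min[of c'] by simp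
qed

lemma equidistant_barycentre_radius_le:
  fixes S :: "'a::real_inner set"
  assumes S: "finite S" "\<And>j. j \<in> S \<Longrightarrow> 0 \<le> u j" "sum u S = 1" "(\<Sum>j\<in>S. u j *\<^sub>R j) = c"
    and radius: "\<And>j. j \<in> S \<Longrightarrow> dist c j = r"
    and diam: "\<And>i j. i \<in> S \<Longrightarrow> j \<in> S \<Longrightarrow> dist i j \<le> D"
  shows "2 * r^2 \<le> D^2 * (1 - 1 / card S)"
proof -
  have "S \<noteq> {}" using S(3) by auto
  obtain i where i: "i \<in> S" "1 / card S \<le> u i"
  proof (rule ccontr)
    assume "\<not> thesis"
    then have "sum u S < (\<Sum>j\<in>S. 1 / card S)"
      using that \<open>S \<noteq> {}\<close> by (intro sum_strict_mono S(1)) force+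
    then show False using S(3) \<open>S \<noteq> {}\<close> S(1) by simp
  qed
  have "2 * r^2 = (\<Sum>j\<in>S. u j * (dist i j)^2)"
    using sum_weighted_dist_sq[of u S id c i] S(3,4) radius i(1)
    by (simp add: dist_commute flip: sum_distrib_right)
  also have "\<dots> = (\<Sum>j\<in>S - {i}. u j * (dist i j)^2)"
    using sum.remove[OF S(1) i(1), of "\<lambda>j. u j * (dist i j)^2"] by simp
  also have "\<dots> \<le> (\<Sum>j\<in>S - {i}. u j * D^2)"
  proof (rule sum_mono)
    fix j assume "j \<in> S - {i}"
    then have "(dist i j)^2 \<le> D^2" using diam[of i j] i(1) by (intro power_mono) auto
    then show "u j * (dist i j)^2 \<le> u j * D^2" using S(2) \<open>j \<in> S - {i}\<close> by (intro mult_left_mono) auto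
  qed
  also have "\<dots> = D^2 * sum u (S - {i})" by (simp add: sum_distrib_left mult.commute)
  also have "\<dots> = D^2 * (1 - u i)" using sum.remove[OF S(1) i(1), of u] S(3) by simp
  also have "\<dots> \<le> D^2 * (1 - 1 / card S)" using i(2) by (intro mult_left_mono) auto
  finally show ?thesis .
qed

theorem jung:
  fixes K :: "'a::euclidean_space set"
  assumes K: "compact K" "K \<noteq> {}" and diam: "\<And>x y. x \<in> K \<Longrightarrow> y \<in> K \<Longrightarrow> dist x y \<le> D"
  shows "\<exists>c. \<forall>x\<in>K. dist c x \<le> sqrt (real DIM('a) / (2 * (real DIM('a) + 1))) * D"
proof -
  define n where "n = real DIM('a)"
  obtain c where centre: "\<And>c'. max_dist K c \<le> max_dist K c'" using chebyshev_centre_exists[OF K] by blast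
  define r where "r = max_dist K c"
  obtain S u where S: "finite S" "S \<subseteq> {x\<in>K. dist c x = r}" "card S \<le> DIM('a) + 1"
    "\<And>x. x \<in> S \<Longrightarrow> 0 \<le> u x" "sum u S = 1" "(\<Sum>v\<in>S. u v *\<^sub>R v) = c"
    using chebyshev_centre_in_hull_farthest_points[OF K centre]
    unfolding convex_hull_caratheodory r_def by blast
  have "card S > 0" using S(1,5) by (auto simp: card_gt_0_iff)
  have n0: "n > 0" by (simp add: n_def)
  obtain x0 where "x0 \<in> K" using K(2) by blast
  then have "0 \<le> D" using diam[of x0 x0] by simp
  have "2 * r^2 \<le> D^2 * (1 - 1 / card S)"
  proof (rule equidistant_barycentre_radius_le[OF S(1,4,5,6)])
    show "dist c j = r" if "j \<in> S" for j using that S(2) by blast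
    show "dist i j \<le> D" if "i \<in> S" "j \<in> S" for i j using that S(2) diam by blast
  qed
  also have "\<dots> \<le> D^2 * (1 - 1 / (n + 1))"
  proof -
    have "1 / (n + 1) \<le> 1 / card S"
      using S(3) \<open>card S > 0\<close> by (intro divide_left_mono) (auto simp: n_def)
    then show ?thesis by (intro mult_left_mono) auto
  qed
  also have "\<dots> = 2 * (sqrt (n / (2 * (n + 1))) * D)^2"
    using n0 by (simp add: power_mult_distrib field_simps)
  finally have "r^2 \<le> (sqrt (n / (2 * (n + 1))) * D)^2" by simp
  moreover have "0 \<le> sqrt (n / (2 * (n + 1))) * D" using \<open>0 \<le> D\<close> n0 by simp
  ultimately have "r \<le> sqrt (n / (2 * (n + 1))) * D" by (rule power2_le_imp_le)
  then have "dist c x \<le> sqrt (n / (2 * (n + 1))) * D" if "x \<in> K" for x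
    using dist_le_max_dist[OF K(1) that, of c] r_def by linarith
  then show ?thesis unfolding n_def by (intro exI ballI)
qed

lemma length_play [simp]: "length (play Q A n) = n"
  by (induction n) (simp_all add: Let_def)

lemma play_answers_within_noise:
  assumes "valid_adversary \<delta> x A" "k < n"
  shows "\<bar>play Q A n ! k - inner x (Q (take k (play Q A n)))\<bar> \<le> \<delta>"
  using assms(2)
proof (induction n)
  case (Suc n)
  show ?case
  proof (cases "k < n")
    case True
    then show ?thesis using Suc.IH by (simp add: Let_def nth_append)
  next
    case False
    then have "k = n" using Suc.prems by simp
    then show ?thesis
      using assms(1) unfolding valid_adversary_def
      by (simp add: Let_def nth_append) (erule allE[of _ "_ @ [Q (play Q A n)]"], simp)
  qed
qed simp

lemma play_cong_unit_queries:
  assumes "valid_reconstructor Q" "\<And>qs. qs \<noteq> [] \<Longrightarrow> norm (last qs) = 1 \<Longrightarrow> A qs = B qs"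
  shows "play Q A n = play Q B n"
proof (induction n)
  case (Suc n)
  have "norm (Q (play Q A n)) = 1" using assms(1) by (simp add: valid_reconstructor_def)
  then show ?case using assms(2) Suc.IH by (simp add: Let_def)
qed simp

lemma OPT_le:
  fixes Q out :: "real list \<Rightarrow> real^'d::finite"
  assumes "valid_reconstructor Q"
    and "\<And>x A. valid_adversary \<delta> x A \<Longrightarrow> norm (out (play Q A T) - x) \<le> \<rho>"
  shows "OPT TYPE('d) T \<delta> \<le> ereal \<rho>"
  unfolding OPT_def using assms by (intro INF_lower2[of "(Q, out)"] SUP_least) auto

lemma OPT_ge:
  assumes "\<And>Q out :: real list \<Rightarrow> real^'d::finite. valid_reconstructor Q \<Longrightarrow>
             \<exists>x A. valid_adversary \<delta> x A \<and> L \<le> norm (out (play Q A T) - x)"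
  shows "ereal L \<le> OPT TYPE('d) T \<delta>"
  unfolding OPT_def using assms by (fastforce intro!: INF_greatest intro: SUP_upper2)

section \<open>Upper bound: cyclic queries along a net of the sphere\<close>

lemma finite_sphere_net:
  assumes "0 < \<epsilon>"
  obtains N :: "'a::euclidean_space set"
  where "finite N" "N \<subseteq> sphere 0 1" "\<And>w. w \<in> sphere 0 1 \<Longrightarrow> \<exists>v\<in>N. dist w v < \<epsilon>"
proof -
  have "sphere (0::'a) 1 \<subseteq> (\<Union>c\<in>sphere 0 1. ball c \<epsilon>)" using assms by force
  then obtain N where "N \<subseteq> sphere (0::'a) 1" "finite N" "sphere (0::'a) 1 \<subseteq> (\<Union>c\<in>N. ball c \<epsilon>)"
    using compactE_image[OF compact_sphere, of "sphere 0 1" "\<lambda>c. ball c \<epsilon>"] by blast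
  then show ?thesis using that by (force simp: dist_commute)
qed

lemma dist_le_of_net_projections:
  fixes x y :: "'a::euclidean_space"
  assumes net: "\<And>w. w \<in> sphere 0 1 \<Longrightarrow> \<exists>v\<in>N. dist w v < \<epsilon>" and "\<epsilon> < 1"
    and proj: "\<And>v. v \<in> N \<Longrightarrow> \<bar>inner (x - y) v\<bar> \<le> a"
  shows "dist x y \<le> a / (1 - \<epsilon>)"
proof (cases "x = y")
  case True
  obtain b :: 'a where "b \<in> Basis" using nonempty_Basis by blast
  then have "b \<in> sphere 0 1" by simp
  then have "0 \<le> a" using net proj by fastforce
  then show ?thesis using True \<open>\<epsilon> < 1\<close> by simp
next
  case False
  define z where "z = x - y"
  have "norm z > 0" using False by (simp add: z_def)
  then have "(1 / norm z) *\<^sub>R z \<in> sphere 0 1" by simp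
  then obtain v where v: "v \<in> N" "dist ((1 / norm z) *\<^sub>R z) v < \<epsilon>" using net by blast
  have "norm z = inner z ((1 / norm z) *\<^sub>R z)"
    using \<open>norm z > 0\<close> by (simp add: power2_norm_eq_inner[symmetric] power2_eq_square)
  also have "\<dots> = inner z v + inner z ((1 / norm z) *\<^sub>R z - v)" by (simp add: inner_diff_right)
  also have "\<dots> \<le> a + norm z * \<epsilon>"
  proof -
    have "inner z ((1 / norm z) *\<^sub>R z - v) \<le> norm z * norm ((1 / norm z) *\<^sub>R z - v)"
      by (rule norm_cauchy_schwarz)
    also have "\<dots> \<le> norm z * \<epsilon>"
      using v(2) \<open>norm z > 0\<close> by (intro mult_left_mono) (simp_all add: dist_norm)
    finally show ?thesis using proj[OF v(1)] by (simp add: z_def)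
  qed
  finally show ?thesis using \<open>\<epsilon> < 1\<close> by (simp add: z_def dist_norm field_simps)
qed

definition consistent_set :: "real \<Rightarrow> (real list \<Rightarrow> 'a::real_inner) \<Rightarrow> real list \<Rightarrow> 'a set" where
  "consistent_set \<delta> Q rs = {y. \<forall>k<length rs. \<bar>rs ! k - inner y (Q (take k rs))\<bar> \<le> \<delta>}"

lemma closed_consistent_set: "closed (consistent_set \<delta> Q rs)"
proof -
  have "consistent_set \<delta> Q rs = (\<Inter>k<length rs. {y. \<bar>rs ! k - inner y (Q (take k rs))\<bar> \<le> \<delta>})"
    by (auto simp: consistent_set_def)
  then show ?thesis by (auto intro!: closed_Collect_le continuous_intros)
qed

lemma secret_in_consistent_set:
  assumes "valid_adversary \<delta> x A"
  shows "x \<in> consistent_set \<delta> Q (play Q A n)"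
  using play_answers_within_noise[OF assms] by (simp add: consistent_set_def)

lemma eventually_OPT_le:
  assumes "\<delta> > 0" "0 < \<epsilon>" "\<epsilon> < 1"
  shows "eventually (\<lambda>T. OPT TYPE('d::finite) T \<delta>
           \<le> ereal (sqrt (real CARD('d) / (2 * (real CARD('d) + 1))) * (2 * \<delta>) / (1 - \<epsilon>))) sequentially"
proof -
  obtain N :: "(real^'d) set" where N: "finite N" "N \<subseteq> sphere 0 1"
    and net: "\<And>w. w \<in> sphere 0 1 \<Longrightarrow> \<exists>v\<in>N. dist w v < \<epsilon>"
    using finite_sphere_net[OF assms(2)] by blast
  obtain L where L: "set L = N" using finite_list[OF N(1)] by blast
  obtain i :: 'd where True by simp
  have "L \<noteq> []" using net[of "axis i 1"] L by auto
  define Q :: "real list \<Rightarrow> real^'d" where "Q rs = L ! (length rs mod length L)" for rs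
  define \<rho> where "\<rho> = sqrt (real CARD('d) / (2 * (real CARD('d) + 1))) * (2 * \<delta> / (1 - \<epsilon>))"
  define out :: "real list \<Rightarrow> real^'d" where
    "out rs = (SOME c. \<forall>y\<in>consistent_set \<delta> Q rs. dist c y \<le> \<rho>)" for rs
  have "Q rs \<in> N" for rs using \<open>L \<noteq> []\<close> L by (auto simp: Q_def)
  then have "valid_reconstructor Q" using N(2) by (force simp: valid_reconstructor_def)
  moreover have "norm (out (play Q A T) - x) \<le> \<rho>"
    if "length L \<le> T" "valid_adversary \<delta> x A" for T x A
  proof -
    define K where "K = consistent_set \<delta> Q (play Q A T)"
    have "x \<in> K" using secret_in_consistent_set[OF that(2)] by (simp add: K_def)
    have diam: "dist y z \<le> 2 * \<delta> / (1 - \<epsilon>)" if "y \<in> K" "z \<in> K" for y z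
    proof (rule dist_le_of_net_projections[OF net \<open>\<epsilon> < 1\<close>])
      fix v assume "v \<in> N"
      then obtain j where "j < length L" "v = L ! j" using L by (auto simp: in_set_conv_nth)
      then have "j < T" "Q (take j (play Q A T)) = v" using \<open>length L \<le> T\<close> by (simp_all add: Q_def)
      then show "\<bar>inner (y - z) v\<bar> \<le> 2 * \<delta>"
        using \<open>y \<in> K\<close> \<open>z \<in> K\<close> by (fastforce simp: K_def consistent_set_def inner_diff_left)
    qed
    have "K \<subseteq> cball x (2 * \<delta> / (1 - \<epsilon>))" using diam \<open>x \<in> K\<close> by auto
    then have "compact K"
      using closed_consistent_set bounded_subset[OF bounded_cball]
      by (auto simp: compact_eq_bounded_closed K_def)
    then obtain c where "\<forall>y\<in>K. dist c y \<le> \<rho>"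
      using jung[OF _ _ diam] \<open>x \<in> K\<close> by (auto simp: \<rho>_def)
    then have "\<forall>y\<in>K. dist (out (play Q A T)) y \<le> \<rho>"
      unfolding out_def K_def by (rule someI)
    then show ?thesis using \<open>x \<in> K\<close> by (simp add: dist_norm norm_minus_commute)
  qed
  ultimately have "OPT TYPE('d) T \<delta> \<le> ereal \<rho>" if "length L \<le> T" for T
    using that by (intro OPT_le) auto
  then show ?thesis by (intro eventually_sequentiallyI) (simp add: \<rho>_def)
qed

section \<open>Lower bound: the regular simplex\<close>

definition midrange :: "'a::real_inner set \<Rightarrow> 'a \<Rightarrow> real" where
  "midrange P v = (Max ((\<lambda>p. inner p v) ` P) + Min ((\<lambda>p. inner p v) ` P)) / 2"

lemma midrange_close:
  assumes "finite P" "p \<in> P" "norm v = 1" and diam: "\<And>p q. p \<in> P \<Longrightarrow> q \<in> P \<Longrightarrow> dist p q \<le> 2 * \<delta>"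
  shows "\<bar>midrange P v - inner p v\<bar> \<le> \<delta>"
proof -
  define I where "I = (\<lambda>p. inner p v) ` P"
  have "finite I" "I \<noteq> {}" using assms(1,2) by (auto simp: I_def)
  obtain p1 p2 where p12: "p1 \<in> P" "p2 \<in> P" "Max I = inner p1 v" "Min I = inner p2 v"
    using Max_in[OF \<open>finite I\<close> \<open>I \<noteq> {}\<close>] Min_in[OF \<open>finite I\<close> \<open>I \<noteq> {}\<close>] by (auto simp: I_def)
  have "Max I - Min I = inner (p1 - p2) v" by (simp add: p12 inner_diff_left)
  also have "\<dots> \<le> norm (p1 - p2) * norm v" by (rule norm_cauchy_schwarz)
  also have "\<dots> \<le> 2 * \<delta>" using diam[OF p12(1,2)] assms(3) by (simp add: dist_norm)
  finally have "Max I - Min I \<le> 2 * \<delta>" .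
  moreover have "Min I \<le> inner p v" "inner p v \<le> Max I"
    using \<open>finite I\<close> assms(2) by (auto simp: I_def)
  ultimately show ?thesis unfolding midrange_def I_def[symmetric] by (simp add: abs_le_iff field_simps)
qed

lemma OPT_ge_of_small_diameter:
  fixes P :: "(real^'d::finite) set"
  assumes "finite P" and diam: "\<And>p q. p \<in> P \<Longrightarrow> q \<in> P \<Longrightarrow> dist p q \<le> 2 * \<delta>"
    and far: "\<And>y. \<exists>p\<in>P. L \<le> dist y p"
  shows "ereal L \<le> OPT TYPE('d) T \<delta>"
proof (rule OPT_ge)
  fix Q out :: "real list \<Rightarrow> real^'d"
  assume "valid_reconstructor Q"
  \<comment> \<open>answering the midrange is consistent with every point of P, so the transcript reveals nothing\<close>
  define B :: "(real^'d) list \<Rightarrow> real" where "B qs = midrange P (last qs)" for qs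
  obtain x where "x \<in> P" "L \<le> dist (out (play Q B T)) x" using far by blast
  define A :: "(real^'d) list \<Rightarrow> real" where
    "A qs = (if norm (last qs) = 1 then B qs else inner x (last qs))" for qs
  have "0 \<le> \<delta>" using diam[OF \<open>x \<in> P\<close> \<open>x \<in> P\<close>] by simp
  then have "valid_adversary \<delta> x A"
    using midrange_close[OF \<open>finite P\<close> \<open>x \<in> P\<close> _ diam] by (simp add: valid_adversary_def A_def B_def)
  moreover have "play Q A T = play Q B T"
    by (rule play_cong_unit_queries[OF \<open>valid_reconstructor Q\<close>]) (simp add: A_def)
  ultimately show "\<exists>x A. valid_adversary \<delta> x A \<and> L \<le> norm (out (play Q A T) - x)"
    using \<open>L \<le> dist (out (play Q B T)) x\<close> by (metis dist_norm)
qed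

lemma equilateral_far_point:
  fixes v :: "'i \<Rightarrow> 'a::real_inner"
  assumes I: "finite I" "I \<noteq> {}" and "0 \<le> a"
    and equi: "\<And>i j. i \<in> I \<Longrightarrow> j \<in> I \<Longrightarrow> i \<noteq> j \<Longrightarrow> dist (v i) (v j) = a"
  shows "\<exists>i\<in>I. sqrt ((real (card I) - 1) / (2 * real (card I))) * a \<le> dist y (v i)"
proof -
  define m where "m = real (card I)"
  have "m > 0" using I by (simp add: m_def card_gt_0_iff)
  have weights: "(\<Sum>i\<in>I. 1 / m) = 1" using \<open>m > 0\<close> by (simp add: m_def)
  define g where "g = (\<Sum>i\<in>I. (1 / m) *\<^sub>R v i)"
  define M where "M = (\<Sum>i\<in>I. 1 / m * (dist g (v i))^2)"
  have mean: "(\<Sum>i\<in>I. 1 / m * (dist x (v i))^2) = (dist x g)^2 + M" for x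
    unfolding M_def by (rule sum_weighted_dist_sq[OF weights g_def[symmetric]])
  have row: "(\<Sum>i\<in>I. 1 / m * (dist (v j) (v i))^2) = (m - 1) / m * a^2" if "j \<in> I" for j
  proof -
    have "(\<Sum>i\<in>I. 1 / m * (dist (v j) (v i))^2) = (\<Sum>i\<in>I - {j}. 1 / m * (dist (v j) (v i))^2)"
      using sum.remove[OF I(1) that, of "\<lambda>i. 1 / m * (dist (v j) (v i))^2"] by simp
    also have "\<dots> = (\<Sum>i\<in>I - {j}. 1 / m * a^2)"
      using equi[OF that] by (intro sum.cong) auto
    also have "\<dots> = (m - 1) / m * a^2"
      using I(1) that \<open>m > 0\<close> by (simp add: m_def field_simps)
    finally show ?thesis .
  qed
  \<comment> \<open>averaging the mean formula over the vertices themselves determines M\<close>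
  have "(m - 1) / m * a^2 = (\<Sum>j\<in>I. 1 / m * ((m - 1) / m * a^2))"
    using weights by (simp flip: sum_distrib_right)
  also have "\<dots> = (\<Sum>j\<in>I. 1 / m * ((dist (v j) g)^2 + M))"
  proof (rule sum.cong)
    fix j assume "j \<in> I"
    then have "(m - 1) / m * a^2 = (dist (v j) g)^2 + M" using row mean[of "v j"] by simp
    then show "1 / m * ((m - 1) / m * a^2) = 1 / m * ((dist (v j) g)^2 + M)" by simp
  qed simp
  also have "\<dots> = 2 * M"
    using weights by (simp add: M_def dist_commute distrib_left sum.distrib flip: sum_distrib_right)
  finally have M: "M = (m - 1) / (2 * m) * a^2" using \<open>m > 0\<close> by (simp add: field_simps)
  have "\<exists>i\<in>I. M \<le> (dist y (v i))^2"
  proof (rule ccontr)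
    assume "\<not> ?thesis"
    then have "(dist y (v i))^2 < M" if "i \<in> I" for i using that by (simp add: not_le)
    then have "(\<Sum>i\<in>I. 1 / m * (dist y (v i))^2) < (\<Sum>i\<in>I. 1 / m * M)"
      using \<open>m > 0\<close> by (intro sum_strict_mono I mult_strict_left_mono) auto
    also have "\<dots> = M" using weights by (simp flip: sum_distrib_right)
    finally show False using mean[of y] by simp
  qed
  then obtain i where "i \<in> I" "M \<le> (dist y (v i))^2" by blast
  have "sqrt ((m - 1) / (2 * m)) * a = sqrt M"
    using \<open>0 \<le> a\<close> unfolding M real_sqrt_mult by simp
  also have "\<dots> \<le> dist y (v i)"
    using real_sqrt_le_mono[OF \<open>M \<le> (dist y (v i))^2\<close>] by simp
  finally show ?thesis using \<open>i \<in> I\<close> m_def by blast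
qed

text \<open>The apex (t, ..., t) is at distance sqrt 2 from each basis vector of \<real>^d, as the basis vectors
  are from each other, exactly when d t^2 = 2 t + 1.\<close>
definition simplex_apex_coord :: "real \<Rightarrow> real" where
  "simplex_apex_coord n = (1 + sqrt (n + 1)) / n"

lemma simplex_apex_coord_eq:
  assumes "n > 0"
  shows "n * (simplex_apex_coord n)^2 = 2 * simplex_apex_coord n + 1"
proof -
  have "(sqrt (n + 1))^2 = n + 1" using assms by simp
  then show ?thesis using assms
    by (simp add: simplex_apex_coord_def power_divide field_simps power2_eq_square)
qed

definition simplex_vertex :: "'d::finite option \<Rightarrow> real^'d" where
  "simplex_vertex w =
     (case w of Some i \<Rightarrow> axis i 1 | None \<Rightarrow> (\<chi> _. simplex_apex_coord (real CARD('d))))"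

lemma dist_simplex_vertex:
  fixes w w' :: "'d::finite option"
  assumes "w \<noteq> w'"
  shows "dist (simplex_vertex w) (simplex_vertex w') = sqrt 2"
proof -
  define t where "t = simplex_apex_coord (real CARD('d))"
  have sq_dist: "(dist x y)^2 = inner x x - 2 * inner x y + inner y y" for x y :: "real^'d"
    by (simp add: dist_norm power2_norm_eq_inner inner_diff_left inner_diff_right inner_commute)
  have axes: "(dist (axis i 1) (axis j 1 :: real^'d))^2 = 2" if "i \<noteq> j" for i j
    using that by (simp add: sq_dist inner_axis_axis)
  have apex: "(dist (axis i 1) (\<chi> _. t :: real^'d))^2 = 2" for i
  proof -
    have "inner (\<chi> _. t :: real^'d) (\<chi> _. t) = real CARD('d) * t^2"
      by (simp add: inner_vec_def power2_eq_square)
    then show ?thesis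
      using simplex_apex_coord_eq[of "real CARD('d)"] by (simp add: sq_dist inner_axis' t_def)
  qed
  have "(dist (simplex_vertex w) (simplex_vertex w'))^2 = 2"
    using assms axes apex
    by (cases w; cases w') (auto simp: simplex_vertex_def t_def dist_commute)
  then have "sqrt ((dist (simplex_vertex w) (simplex_vertex w'))^2) = sqrt 2" by simp
  then show ?thesis by simp
qed

lemma OPT_ge_simplex_circumradius:
  assumes "\<delta> > 0"
  shows "ereal (sqrt (real CARD('d) / (2 * (real CARD('d) + 1))) * (2 * \<delta>)) \<le> OPT TYPE('d::finite) T \<delta>"
proof -
  define v :: "'d option \<Rightarrow> real^'d" where "v w = (sqrt 2 * \<delta>) *\<^sub>R simplex_vertex w" for w
  have dist_v: "dist (v w) (v w') = 2 * \<delta>" if "w \<noteq> w'" for w w'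
  proof -
    have "dist (v w) (v w') = \<bar>sqrt 2 * \<delta>\<bar> * dist (simplex_vertex w) (simplex_vertex w')"
      by (simp add: v_def dist_norm flip: scaleR_diff_right)
    then show ?thesis using dist_simplex_vertex[OF that] assms by simp
  qed
  have "card (UNIV :: 'd option set) = CARD('d) + 1"
    by (simp add: UNIV_option_conv card_image)
  then have "\<exists>w. sqrt (real CARD('d) / (2 * (real CARD('d) + 1))) * (2 * \<delta>) \<le> dist y (v w)" for y
    using equilateral_far_point[of UNIV "2 * \<delta>" v y] dist_v assms by (simp add: algebra_simps)
  moreover have "dist (v w) (v w') \<le> 2 * \<delta>" for w w'
    using dist_v assms by (cases "w = w'") auto
  ultimately show ?thesis by (intro OPT_ge_of_small_diameter[of "range v"]) auto
qed

lemma tendsto_ereal_of_relative_bounds: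
  fixes f :: "nat \<Rightarrow> ereal"
  assumes "L > 0" and lower: "\<And>T. ereal L \<le> f T"
    and upper: "\<And>\<epsilon>. 0 < \<epsilon> \<Longrightarrow> \<epsilon> < 1 \<Longrightarrow> eventually (\<lambda>T. f T \<le> ereal (L / (1 - \<epsilon>))) sequentially"
  shows "(f \<longlongrightarrow> ereal L) sequentially"
proof (rule order_tendstoI)
  fix a assume "a < ereal L"
  then have "a < f T" for T using lower[of T] by (rule less_le_trans)
  then show "eventually (\<lambda>T. a < f T) sequentially" by simp
next
  fix b assume "ereal L < b"
  then obtain z where "ereal L < ereal z" "ereal z < b" using ereal_dense2 by blast
  then have z: "L < z" "ereal z < b" by simp_all
  \<comment> \<open>chosen so that L / (1 - \<epsilon>) is the midpoint of L and z\<close>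
  define \<epsilon> where "\<epsilon> = (z - L) / (z + L)"
  have "0 < \<epsilon>" "\<epsilon> < 1" using z(1) \<open>L > 0\<close> by (simp_all add: \<epsilon>_def)
  then have "eventually (\<lambda>T. f T \<le> ereal (L / (1 - \<epsilon>))) sequentially" by (rule upper)
  moreover have "L / (1 - \<epsilon>) < z"
    using z(1) \<open>L > 0\<close> by (simp add: \<epsilon>_def field_simps)
  then have "ereal (L / (1 - \<epsilon>)) < ereal z" by simp
  then have "ereal (L / (1 - \<epsilon>)) < b" using z(2) by (rule less_trans)
  ultimately
  show "eventually (\<lambda>T. f T < b) sequentially" by (auto elim: eventually_mono)
qed

lemma sqrt_jung_constant:
  assumes "n \<ge> 0"
  shows "sqrt (n / (2 * (n + 1))) * (2 * \<delta>) = sqrt (2 * n / (n + 1)) * \<delta>"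
proof -
  have "sqrt (2 * n / (n + 1)) = sqrt (2^2 * (n / (2 * (n + 1))))" using assms by (simp add: field_simps)
  also have "\<dots> = 2 * sqrt (n / (2 * (n + 1)))" by (simp only: real_sqrt_mult real_sqrt_abs)
  finally show ?thesis by simp
qed

theorem theorem1:
  fixes \<delta> :: real
  assumes "\<delta> > 0"
  shows "((\<lambda>T. OPT TYPE('d::finite) T \<delta>) \<longlongrightarrow>
            ereal (sqrt (2 * real CARD('d) / (real CARD('d) + 1)) * \<delta>)) sequentially"
proof -
  define L where "L = sqrt (real CARD('d) / (2 * (real CARD('d) + 1))) * (2 * \<delta>)"
  have "L > 0" using assms by (simp add: L_def)
  have "((\<lambda>T. OPT TYPE('d) T \<delta>) \<longlongrightarrow> ereal L) sequentially"
    using \<open>L > 0\<close> OPT_ge_simplex_circumradius[OF assms] eventually_OPT_le[OF assms]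
    by (intro tendsto_ereal_of_relative_bounds) (simp_all add: L_def)
  then show ?thesis unfolding L_def sqrt_jung_constant[OF of_nat_0_le_iff] .
qed

end
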